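(* Let $\Omega\subset\mathbb{R}^n$ be a domain, $\mathcal{S}$ any basis of shapes in $\Omega$, $1\le p<\infty$, and $f\in\mathrm{BMO}^p_{\mathcal{S}}(\Omega)$. Then $\|f\|_{\mathrm{BMO}^p_{\mathcal{S}}}=0$ if and only if $f$ is almost everywhere equal to some constant on $\Omega$.
   Context: A domain is an open connected set. A shape is an open set $S\subset\mathbb{R}^n$ with $0<|S|<\infty$. A basis of shapes in $\Omega$ is a collection of shapes contained in $\Omega$ covering $\Omega$. For $f\in L^1(S)$, $f_S=\frac1{|S|}\int_Sf$. $\mathrm{BMO}^p_{\mathcal{S}}(\Omega)$ is the space of functions $f$ with $f\in L^1(S)$ for all $S\in\mathcal{S}$ such that there is $K\ge0$ with $\big(\frac1{|S|}\int_S|f-f_S|^p\big)^{1/p}\le K$ for all $S\in\mathcal{S}$; $\|f\|_{\mathrm{BMO}^p_{\mathcal{S}}}$ is the infimum of such $K$. *)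

theory Defs
  imports "HOL-Analysis.Analysis"
begin

definition domain :: "'a::euclidean_space set \<Rightarrow> bool" where
  "domain \<Omega> \<longleftrightarrow> open \<Omega> \<and> connected \<Omega>"

definition shape :: "'a::euclidean_space set \<Rightarrow> bool" where
  "shape S \<longleftrightarrow> open S \<and> 0 < emeasure lebesgue S \<and> emeasure lebesgue S < \<infinity>"

definition basis_of_shapes :: "'a::euclidean_space set set \<Rightarrow> 'a set \<Rightarrow> bool" where
  "basis_of_shapes \<S> \<Omega> \<longleftrightarrow> (\<forall>S\<in>\<S>. shape S \<and> S \<subseteq> \<Omega>) \<and> \<Union>\<S> = \<Omega>"

definition avg :: "'a::euclidean_space set \<Rightarrow> ('a \<Rightarrow> real) \<Rightarrow> real" where
  "avg S f = (1 / measure lebesgue S) * (\<integral>x\<in>S. f x \<partial>lebesgue)"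

definition mean_osc :: "real \<Rightarrow> 'a::euclidean_space set \<Rightarrow> ('a \<Rightarrow> real) \<Rightarrow> real" where
  "mean_osc p S f =
     ((1 / measure lebesgue S) * (\<integral>x\<in>S. \<bar>f x - avg S f\<bar> powr p \<partial>lebesgue)) powr (1 / p)"

text \<open>K is an admissible bound: the integral of |f - f_S|^p over S is finite
  (implicit in the informal bound being a real number) and the oscillation is at most K.\<close>
definition bmo_bound :: "real \<Rightarrow> 'a::euclidean_space set set \<Rightarrow> ('a \<Rightarrow> real) \<Rightarrow> real \<Rightarrow> bool" where
  "bmo_bound p \<S> f K \<longleftrightarrow> 0 \<le> K \<and>
     (\<forall>S\<in>\<S>. set_integrable lebesgue S (\<lambda>x. \<bar>f x - avg S f\<bar> powr p) \<and> mean_osc p S f \<le> K)"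

definition in_BMO :: "real \<Rightarrow> 'a::euclidean_space set set \<Rightarrow> ('a \<Rightarrow> real) \<Rightarrow> bool" where
  "in_BMO p \<S> f \<longleftrightarrow> (\<forall>S\<in>\<S>. set_integrable lebesgue S f) \<and> (\<exists>K. bmo_bound p \<S> f K)"

definition BMO_norm :: "real \<Rightarrow> 'a::euclidean_space set set \<Rightarrow> ('a \<Rightarrow> real) \<Rightarrow> real" where
  "BMO_norm p \<S> f = Inf {K. bmo_bound p \<S> f K}"

end

theory Submission
  imports Defs
begin

text \<open>If the oscillation vanishes on every shape, then on each shape \<open>f\<close> is a.e. equal to its
  average. Two overlapping open sets carry the same a.e. value, because a nonempty open set has
  positive measure; connectedness of \<open>\<Omega>\<close> then forces a single value on all of \<open>\<Omega>\<close>, and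
  Lindel\<ouml>f's theorem reduces the a.e. statement on \<open>\<Omega>\<close> to countably many shapes.\<close>

lemma shape_measure_pos:
  assumes "shape S"
  shows "0 < measure lebesgue S"
proof -
  have "0 < emeasure lebesgue S" "emeasure lebesgue S < top"
    using assms unfolding shape_def infinity_ennreal_def by auto
  then show ?thesis
    unfolding measure_def by (simp only: enn2real_positive_iff)
qed

lemma mean_osc_nonneg: "0 \<le> mean_osc p S f"
  unfolding mean_osc_def by simp

lemma mean_osc_eq_0_iff_AE:
  assumes S: "shape S"
    and int: "set_integrable lebesgue S (\<lambda>x. \<bar>f x - avg S f\<bar> powr p)"
  shows "mean_osc p S f = 0 \<longleftrightarrow> (AE x in lebesgue. x \<in> S \<longrightarrow> f x = avg S f)"
proof -
  have "mean_osc p S f = 0 \<longleftrightarrow> (\<integral>x\<in>S. \<bar>f x - avg S f\<bar> powr p \<partial>lebesgue) = 0"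
    using shape_measure_pos[OF S] unfolding mean_osc_def by simp
  also have "\<dots> \<longleftrightarrow> (AE x in lebesgue. indicator S x *\<^sub>R (\<bar>f x - avg S f\<bar> powr p) = 0)"
    using int unfolding set_integrable_def set_lebesgue_integral_def
    by (intro integral_nonneg_eq_0_iff_AE) (auto simp: indicator_def)
  also have "\<dots> \<longleftrightarrow> (AE x in lebesgue. x \<in> S \<longrightarrow> f x = avg S f)"
    by (intro AE_cong) (simp add: indicator_def)
  finally show ?thesis .
qed

lemma avg_eq_const_AE:
  assumes S: "shape S" and int: "set_integrable lebesgue S f"
    and ae: "AE x in lebesgue. x \<in> S \<longrightarrow> f x = c"
  shows "avg S f = c"
proof -
  have S_sets: "S \<in> sets lebesgue" and S_fin: "emeasure lebesgue S \<noteq> \<infinity>"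
    using S unfolding shape_def by auto
  have "(\<integral>x\<in>S. f x \<partial>lebesgue) = (\<integral>x\<in>S. c \<partial>lebesgue)"
    unfolding set_lebesgue_integral_def
  proof (rule integral_cong_AE)
    show "(\<lambda>x. indicator S x *\<^sub>R f x) \<in> borel_measurable lebesgue"
      using int unfolding set_integrable_def by auto
    show "(\<lambda>x. indicator S x *\<^sub>R c) \<in> borel_measurable lebesgue"
      using S_sets by auto
    show "AE x in lebesgue. indicator S x *\<^sub>R f x = indicator S x *\<^sub>R c"
      using ae by (rule eventually_mono) (auto simp: indicator_def)
  qed
  also have "\<dots> = measure lebesgue S * c"
    using set_integral_const[OF S_sets S_fin, of c] by simp
  finally show ?thesis
    using shape_measure_pos[OF S] unfolding avg_def by simp
qed

lemma BMO_norm_eq_0_iff: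
  assumes "bmo_bound p \<S> f K"
  shows "BMO_norm p \<S> f = 0 \<longleftrightarrow> (\<forall>S\<in>\<S>. mean_osc p S f = 0)"
proof
  assume norm: "BMO_norm p \<S> f = 0"
  show "\<forall>S\<in>\<S>. mean_osc p S f = 0"
  proof
    fix S assume "S \<in> \<S>"
    then have "mean_osc p S f \<le> Inf {K. bmo_bound p \<S> f K}"
      using assms by (intro cInf_greatest) (auto simp: bmo_bound_def)
    with norm show "mean_osc p S f = 0"
      using mean_osc_nonneg[of p S f] unfolding BMO_norm_def by linarith
  qed
next
  assume "\<forall>S\<in>\<S>. mean_osc p S f = 0"
  with assms have "bmo_bound p \<S> f 0"
    unfolding bmo_bound_def by auto
  then show "BMO_norm p \<S> f = 0"
    unfolding BMO_norm_def by (intro cInf_eq_minimum) (auto simp: bmo_bound_def)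
qed

lemma AE_const_eq_on_overlap:
  fixes f :: "'a::euclidean_space \<Rightarrow> 'b"
  assumes "open S" "open T" "S \<inter> T \<noteq> {}"
    and ae_S: "AE x in lebesgue. x \<in> S \<longrightarrow> f x = a"
    and ae_T: "AE x in lebesgue. x \<in> T \<longrightarrow> f x = b"
  shows "a = b"
proof (rule ccontr)
  assume "a \<noteq> b"
  have "AE x \<in> S \<inter> T in lebesgue. x \<in> {}"
    using ae_S ae_T by eventually_elim (use \<open>a \<noteq> b\<close> in auto)
  moreover obtain x where "x \<in> S \<inter> T"
    using assms(3) by auto
  ultimately show False
    using mem_closed_if_AE_lebesgue_open[of "S \<inter> T" "{}" x] assms(1,2) by auto
qed

lemma AE_on_Union_open:
  fixes \<S> :: "'a::euclidean_space set set"
  assumes "\<And>S. S \<in> \<S> \<Longrightarrow> open S"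
    and "\<And>S. S \<in> \<S> \<Longrightarrow> AE x in lebesgue. x \<in> S \<longrightarrow> P x"
  shows "AE x in lebesgue. x \<in> \<Union>\<S> \<longrightarrow> P x"
proof -
  obtain \<F> where \<F>: "\<F> \<subseteq> \<S>" "countable \<F>" "\<Union>\<F> = \<Union>\<S>"
    using Lindelof[of \<S>] assms(1) by blast
  then have "AE x in lebesgue. \<forall>S\<in>\<F>. x \<in> S \<longrightarrow> P x"
    using assms(2) by (subst AE_ball_countable) auto
  then show ?thesis
    by (rule eventually_mono) (use \<F>(3) in auto)
qed

lemma AE_const_on_connected_Union:
  fixes \<S> :: "'a::euclidean_space set set"
  assumes conn: "connected (\<Union>\<S>)" and open_\<S>: "\<And>S. S \<in> \<S> \<Longrightarrow> open S"
    and loc: "\<And>S. S \<in> \<S> \<Longrightarrow> \<exists>c. AE x in lebesgue. x \<in> S \<longrightarrow> f x = c"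
  shows "\<exists>c. AE x in lebesgue. x \<in> \<Union>\<S> \<longrightarrow> f x = c"
proof (cases "\<Union>\<S> = {}")
  case True
  show ?thesis unfolding True by simp
next
  case False
  have "\<forall>S\<in>\<S>. \<exists>c. AE x in lebesgue. x \<in> S \<longrightarrow> f x = c"
    using loc ..
  from bchoice[OF this] obtain C
    where C: "\<forall>S\<in>\<S>. AE x in lebesgue. x \<in> S \<longrightarrow> f x = C S" ..
  have C_eq: "C S = C T" if S: "S \<in> \<S>" and T: "T \<in> \<S>" and "S \<inter> T \<noteq> {}" for S T
    using AE_const_eq_on_overlap[OF open_\<S>[OF S] open_\<S>[OF T] _
        C[rule_format, OF S] C[rule_format, OF T]] that(3) .
  obtain S0 where S0: "S0 \<in> \<S>" "S0 \<noteq> {}"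
    using False by auto
  define A where "A = \<Union>{S\<in>\<S>. C S = C S0}"
  define B where "B = \<Union>{S\<in>\<S>. C S \<noteq> C S0}"
  have "A \<inter> \<Union>\<S> = {} \<or> B \<inter> \<Union>\<S> = {}"
  proof (rule connectedD[OF conn])
    show "open A" "open B"
      unfolding A_def B_def using open_\<S> by auto
    show "A \<inter> B \<inter> \<Union>\<S> = {}"
    proof (rule equals0I)
      fix x assume "x \<in> A \<inter> B \<inter> \<Union>\<S>"
      then obtain S T where "S \<in> \<S>" "T \<in> \<S>" "x \<in> S" "x \<in> T" "C S \<noteq> C T"
        unfolding A_def B_def by auto
      with C_eq show False by blast
    qed
    show "\<Union>\<S> \<subseteq> A \<union> B"
      unfolding A_def B_def by blast
  qed
  moreover have "A \<inter> \<Union>\<S> \<noteq> {}"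
    using S0 unfolding A_def by auto
  ultimately have B_disj: "B \<inter> \<Union>\<S> = {}"
    by simp
  have AE_S: "AE x in lebesgue. x \<in> S \<longrightarrow> f x = C S0" if S: "S \<in> \<S>" for S
  proof (cases "C S = C S0")
    case True
    with C[rule_format, OF S] show ?thesis by simp
  next
    case False
    with S have "S \<subseteq> B \<inter> \<Union>\<S>"
      unfolding B_def by auto
    with B_disj show ?thesis by simp
  qed
  from AE_on_Union_open[OF open_\<S> AE_S] show ?thesis ..
qed

lemma AE_eq_avg_iff_AE_const:
  assumes "domain \<Omega>" and "basis_of_shapes \<S> \<Omega>"
    and int: "\<And>S. S \<in> \<S> \<Longrightarrow> set_integrable lebesgue S f"
  shows "(\<forall>S\<in>\<S>. AE x in lebesgue. x \<in> S \<longrightarrow> f x = avg S f)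
    \<longleftrightarrow> (\<exists>c. AE x in lebesgue. x \<in> \<Omega> \<longrightarrow> f x = c)"
proof -
  have shape: "\<And>S. S \<in> \<S> \<Longrightarrow> shape S" and sub: "\<And>S. S \<in> \<S> \<Longrightarrow> S \<subseteq> \<Omega>"
    and cover: "\<Union>\<S> = \<Omega>"
    using assms(2) unfolding basis_of_shapes_def by auto
  show ?thesis
  proof
    assume "\<forall>S\<in>\<S>. AE x in lebesgue. x \<in> S \<longrightarrow> f x = avg S f"
    moreover have "\<And>S. S \<in> \<S> \<Longrightarrow> open S"
      using shape unfolding shape_def by auto
    ultimately show "\<exists>c. AE x in lebesgue. x \<in> \<Omega> \<longrightarrow> f x = c"
      using AE_const_on_connected_Union[of \<S> f] assms(1) cover
      unfolding domain_def by blast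
  next
    assume "\<exists>c. AE x in lebesgue. x \<in> \<Omega> \<longrightarrow> f x = c"
    then obtain c where c: "AE x in lebesgue. x \<in> \<Omega> \<longrightarrow> f x = c" ..
    have "AE x in lebesgue. x \<in> S \<longrightarrow> f x = avg S f" if S: "S \<in> \<S>" for S
    proof -
      have "AE x in lebesgue. x \<in> S \<longrightarrow> f x = c"
        using c by (rule eventually_mono) (use sub[OF S] in auto)
      with avg_eq_const_AE[OF shape[OF S] int[OF S]] show ?thesis
        by simp
    qed
    then show "\<forall>S\<in>\<S>. AE x in lebesgue. x \<in> S \<longrightarrow> f x = avg S f" ..
  qed
qed

theorem proposition3p8:
  fixes \<Omega> :: "'a::euclidean_space set" and \<S> :: "'a set set"
    and f :: "'a \<Rightarrow> real" and p :: real
  assumes "domain \<Omega>" and "basis_of_shapes \<S> \<Omega>"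
    and "1 \<le> p" and "in_BMO p \<S> f"
  shows "BMO_norm p \<S> f = 0 \<longleftrightarrow> (\<exists>c. AE x in lebesgue. x \<in> \<Omega> \<longrightarrow> f x = c)"
proof -
  have shape: "\<And>S. S \<in> \<S> \<Longrightarrow> shape S"
    using assms(2) unfolding basis_of_shapes_def by auto
  obtain K where K: "bmo_bound p \<S> f K" and int: "\<And>S. S \<in> \<S> \<Longrightarrow> set_integrable lebesgue S f"
    using assms(4) unfolding in_BMO_def by auto
  have "BMO_norm p \<S> f = 0 \<longleftrightarrow> (\<forall>S\<in>\<S>. mean_osc p S f = 0)"
    using BMO_norm_eq_0_iff[OF K] .
  also have "\<dots> \<longleftrightarrow> (\<forall>S\<in>\<S>. AE x in lebesgue. x \<in> S \<longrightarrow> f x = avg S f)"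
    using K shape mean_osc_eq_0_iff_AE unfolding bmo_bound_def by blast
  also have "\<dots> \<longleftrightarrow> (\<exists>c. AE x in lebesgue. x \<in> \<Omega> \<longrightarrow> f x = c)"
    using AE_eq_avg_iff_AE_const[OF assms(1,2) int] .
  finally show ?thesis .
qed

end
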